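(* Let $\tilde\eta$ be the corner-flip dynamics on $\Omega^0_L$ started from $\eta_0\in\Omega_L^0$ with $\eta_0(x)\ge\min(x+L,\,L-x,\,L^{3/4})$ for all $x$. Then with probability tending to $1$ as $L\to\infty$, $$\tilde\eta(x,t)\ge-L^{3/4}\quad\forall x\in\{-L,\dots,L\},\ \forall t\in[0,\exp(L^{1/4})].$$
   Context: $\Omega^0_L$ is the set of $\eta\in\mathbb Z^{2L+1}$ indexed by $\{-L,\dots,L\}$ with $\eta_{-L}=\eta_L=0$ and $|\eta_{x+1}-\eta_x|=1$ (no sign constraint). For $x\in\{-L+1,\dots,L-1\}$, $\eta^{(x)}$ coincides with $\eta$ except at $x$, where $\eta^{(x)}_x=\eta_x+2$ if $\eta_{x\pm1}=\eta_x+1$, $\eta_x-2$ if $\eta_{x\pm1}=\eta_x-1$, $\eta_x$ otherwise. The corner-flip dynamics is the continuous-time Markov chain on $\Omega_L^0$ in which each site $x$ carries an independent rate-one Poisson clock and, when it rings, $\eta$ is replaced by $\eta^{(x)}$. *)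

theory Defs
  imports Complex_Main
begin

definition Omega0 :: "nat \<Rightarrow> (int \<Rightarrow> int) set" where
  "Omega0 L = {\<eta>. \<eta> (- int L) = 0 \<and> \<eta> (int L) = 0
      \<and> (\<forall>x\<in>{- int L..<int L}. \<bar>\<eta> (x + 1) - \<eta> x\<bar> = 1)
      \<and> (\<forall>x. x \<notin> {- int L..int L} \<longrightarrow> \<eta> x = 0)}"

definition sites :: "nat \<Rightarrow> int set" where
  "sites L = {- int L + 1 .. int L - 1}"

definition flip :: "(int \<Rightarrow> int) \<Rightarrow> int \<Rightarrow> (int \<Rightarrow> int)" where
  "flip \<eta> x =
     (if \<eta> (x - 1) = \<eta> x + 1 \<and> \<eta> (x + 1) = \<eta> x + 1 then \<eta>(x := \<eta> x + 2)
      else if \<eta> (x - 1) = \<eta> x - 1 \<and> \<eta> (x + 1) = \<eta> x - 1 then \<eta>(x := \<eta> x - 2)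
      else \<eta>)"

fun run :: "(int \<Rightarrow> int) \<Rightarrow> int list \<Rightarrow> (int \<Rightarrow> int)" where
  "run \<eta> [] = \<eta>"
| "run \<eta> (x # xs) = run (flip \<eta> x) xs"

definition good_seq :: "nat \<Rightarrow> real \<Rightarrow> (int \<Rightarrow> int) \<Rightarrow> int list \<Rightarrow> bool" where
  "good_seq L h \<eta>0 xs =
     (\<forall>k\<le>length xs. \<forall>x\<in>{- int L..int L}. real_of_int (run \<eta>0 (take k xs) x) \<ge> - h)"

(* Probability that the corner-flip dynamics started at eta0 satisfies
   eta(x,t) >= -h for all x in {-L..L} and all t in [0,T].
   Construction (exact, by superposition of the 2L-1 independent rate-one clocks):
   the rings in [0,T] form a Poisson(N T) number K of events, N = |sites L|,
   and given K = k, the sequence of ringing sites is i.i.d. uniform on sites L.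
   The path on [0,T] visits exactly the states run eta0 (take j xs), j <= k. *)
definition stay_prob :: "nat \<Rightarrow> real \<Rightarrow> real \<Rightarrow> (int \<Rightarrow> int) \<Rightarrow> real" where
  "stay_prob L h T \<eta>0 =
     (let N = real (card (sites L)) in
      (\<Sum>k. exp (- N * T) * (N * T) ^ k / fact k *
            (real (card {xs. set xs \<subseteq> sites L \<and> length xs = k \<and> good_seq L h \<eta>0 xs})
             / N ^ k)))"

end

(*
  The corner flip dynamics coincides in law with a heat-bath dynamics in which every site
  carries an up-clock and a down-clock, each of rate one: an up-ring sets the height to
  min of the neighbours plus one, a down-ring to max of the neighbours minus one.  Both
  updates are monotone, so the probability of staying above -h up to time T is monotone in
  the initial configuration.  The uniform measure on Omega_L^0 is invariant under every
  flip, and under it a configuration dips below -h somewhere with probability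
  q <= (2L+1)(2L) exp(-h^2/8L) (Chernoff bound for the steps of a random walk bridge).
  A union bound over the Poisson(NT) many rings shows that the uniform initial condition
  leaves {eta >= -h} before time T with probability at most (NT+1) q.  By symmetry also
  the configurations exceeding h somewhere have probability at most q, and every other
  configuration is dominated by eta0; averaging over them gives
  (1-q)(1 - P(stay)) <= (NT+1) q.  For h = L^(3/4) and T = exp(L^(1/4)) the right-hand
  side is of order L^3 exp(L^(1/4) - L^(1/2)/8), which tends to zero.
*)
theory Submission
  imports Defs "HOL-Real_Asymp.Real_Asymp"
begin

lemma Omega0D:
  assumes "\<zeta> \<in> Omega0 L"
  shows "\<zeta> (- int L) = 0" "\<zeta> (int L) = 0"
    "\<And>x. x \<in> {- int L..<int L} \<Longrightarrow> \<bar>\<zeta> (x + 1) - \<zeta> x\<bar> = 1"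
    "\<And>x. x \<notin> {- int L..int L} \<Longrightarrow> \<zeta> x = 0"
  using assms unfolding Omega0_def by auto

lemma Omega0_neighbour_steps:
  assumes "\<zeta> \<in> Omega0 L" "x \<in> sites L"
  shows "\<bar>\<zeta> x - \<zeta> (x - 1)\<bar> = 1" "\<bar>\<zeta> (x + 1) - \<zeta> x\<bar> = 1"
  using Omega0D(3)[OF assms(1), of "x - 1"] Omega0D(3)[OF assms(1), of x] assms(2)
  by (auto simp: sites_def)

lemma uminus_in_Omega0: "\<zeta> \<in> Omega0 L \<Longrightarrow> (\<lambda>x. - \<zeta> x) \<in> Omega0 L"
  unfolding Omega0_def by (auto simp: abs_minus_commute)

lemma finite_sites: "finite (sites L)"
  unfolding sites_def by simp

lemma card_sites: "card (sites L) = 2 * L - 1"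
  unfolding sites_def by simp

lemma flip_flip [simp]: "flip (flip \<zeta> x) x = \<zeta>"
  unfolding flip_def by (auto simp: fun_eq_iff)

lemma flip_other: "y \<noteq> x \<Longrightarrow> flip \<zeta> x y = \<zeta> y"
  unfolding flip_def by auto

lemma flip_in_Omega0:
  assumes "\<zeta> \<in> Omega0 L" "x \<in> sites L"
  shows "flip \<zeta> x \<in> Omega0 L"
  unfolding Omega0_def
proof (intro CollectI conjI ballI allI impI)
  note D = Omega0D[OF assms(1)]
  have x: "- int L < x" "x < int L" using assms(2) by (auto simp: sites_def)
  show "flip \<zeta> x (- int L) = 0" "flip \<zeta> x (int L) = 0"
    using D(1,2) x by (simp_all add: flip_other)
  show "flip \<zeta> x y = 0" if "y \<notin> {- int L..int L}" for y
    using D(4) x that by (subst flip_other) auto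
  show "\<bar>flip \<zeta> x (y + 1) - flip \<zeta> x y\<bar> = 1" if "y \<in> {- int L..<int L}" for y
    using D(3)[OF that] Omega0_neighbour_steps[OF assms] unfolding flip_def
    by (auto simp: abs_if split: if_splits)
qed

lemma bij_betw_flip: "x \<in> sites L \<Longrightarrow> bij_betw (\<lambda>\<zeta>. flip \<zeta> x) (Omega0 L) (Omega0 L)"
  by (rule bij_betw_byWitness[where f' = "\<lambda>\<zeta>. flip \<zeta> x"]) (auto simp: flip_in_Omega0)

section \<open>Counting height functions by their up-steps\<close>

definition up_steps :: "nat \<Rightarrow> (int \<Rightarrow> int) \<Rightarrow> nat set" where
  "up_steps L \<zeta> = {i. i < 2 * L \<and> \<zeta> (- int L + int i + 1) = \<zeta> (- int L + int i) + 1}"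

definition height_of_up_steps :: "nat \<Rightarrow> nat set \<Rightarrow> int \<Rightarrow> int" where
  "height_of_up_steps L A x =
     (if x \<in> {- int L..int L} then 2 * int (card (A \<inter> {..<nat (x + int L)})) - (x + int L) else 0)"

lemma up_steps_subset: "up_steps L \<zeta> \<subseteq> {..<2 * L}"
  unfolding up_steps_def by auto

lemma height_eq_up_steps:
  assumes "\<zeta> \<in> Omega0 L" "n \<le> 2 * L"
  shows "\<zeta> (- int L + int n) = 2 * int (card (up_steps L \<zeta> \<inter> {..<n})) - int n"
  using assms(2)
proof (induction n)
  case 0
  then show ?case using Omega0D(1)[OF assms(1)] by simp
next
  case (Suc n)
  then have n: "n < 2 * L" by simp
  have step: "\<bar>\<zeta> (- int L + int n + 1) - \<zeta> (- int L + int n)\<bar> = 1"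
    using Omega0D(3)[OF assms(1), of "- int L + int n"] n by auto
  have IH: "\<zeta> (- int L + int n) = 2 * int (card (up_steps L \<zeta> \<inter> {..<n})) - int n"
    using Suc n by simp
  show ?case
  proof (cases "n \<in> up_steps L \<zeta>")
    case True
    then have "up_steps L \<zeta> \<inter> {..<Suc n} = insert n (up_steps L \<zeta> \<inter> {..<n})" by auto
    moreover have "\<zeta> (- int L + int n + 1) = \<zeta> (- int L + int n) + 1"
      using True unfolding up_steps_def by auto
    ultimately show ?thesis using IH by (simp add: add.commute add.left_commute)
  next
    case False
    then have "up_steps L \<zeta> \<inter> {..<Suc n} = up_steps L \<zeta> \<inter> {..<n}" by (auto simp: less_Suc_eq)
    moreover have "\<zeta> (- int L + int n + 1) = \<zeta> (- int L + int n) - 1"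
      using False n step unfolding up_steps_def by (auto simp: abs_if split: if_splits)
    ultimately show ?thesis using IH by (simp add: add.commute add.left_commute)
  qed
qed

lemma inj_on_up_steps: "inj_on (up_steps L) (Omega0 L)"
proof (rule inj_onI, rule ext)
  fix \<zeta> \<xi> y assume \<zeta>: "\<zeta> \<in> Omega0 L" and \<xi>: "\<xi> \<in> Omega0 L" and eq: "up_steps L \<zeta> = up_steps L \<xi>"
  show "\<zeta> y = \<xi> y"
  proof (cases "y \<in> {- int L..int L}")
    case True
    define n where "n = nat (y + int L)"
    have y: "y = - int L + int n" "n \<le> 2 * L" using True unfolding n_def by auto
    show ?thesis unfolding y(1) height_eq_up_steps[OF \<zeta> y(2)] height_eq_up_steps[OF \<xi> y(2)] eq ..
  next
    case False
    then show ?thesis using Omega0D(4)[OF \<zeta>] Omega0D(4)[OF \<xi>] by simp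
  qed
qed

lemma finite_Omega0: "finite (Omega0 L)"
  using inj_on_finite[OF inj_on_up_steps, where B = "Pow {..<2 * L}"] up_steps_subset by auto

lemma Omega0_le_distance_to_boundary:
  assumes "\<zeta> \<in> Omega0 L" "x \<in> {- int L..int L}"
  shows "\<zeta> x \<le> x + int L" "\<zeta> x \<le> int L - x"
proof -
  define n where "n = nat (x + int L)"
  have x: "x = - int L + int n" "n \<le> 2 * L" using assms(2) unfolding n_def by auto
  have "card (up_steps L \<zeta> \<inter> {..<n}) \<le> n"
    using card_mono[of "{..<n}" "up_steps L \<zeta> \<inter> {..<n}"] by auto
  moreover have "card (up_steps L \<zeta> \<inter> {..<n}) \<le> card (up_steps L \<zeta> \<inter> {..<2 * L})"
    using x(2) by (intro card_mono) auto
  moreover have "card (up_steps L \<zeta> \<inter> {..<2 * L}) = L"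
    using height_eq_up_steps[OF assms(1), of "2 * L"] Omega0D(2)[OF assms(1)] by simp
  ultimately show "\<zeta> x \<le> x + int L" "\<zeta> x \<le> int L - x"
    using height_eq_up_steps[OF assms(1) x(2)] x(1) by simp_all
qed

lemma height_of_up_steps_step:
  assumes "x \<in> {- int L..<int L}"
  shows "height_of_up_steps L A (x + 1) - height_of_up_steps L A x =
    (if nat (x + int L) \<in> A then 1 else -1)"
proof -
  have succ: "nat (x + 1 + int L) = Suc (nat (x + int L))" using assms by auto
  show ?thesis
  proof (cases "nat (x + int L) \<in> A")
    case True
    then have "A \<inter> {..<Suc (nat (x + int L))} = insert (nat (x + int L)) (A \<inter> {..<nat (x + int L)})"
      by auto
    then show ?thesis using assms True unfolding height_of_up_steps_def succ by auto
  next
    case False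
    then have "A \<inter> {..<Suc (nat (x + int L))} = A \<inter> {..<nat (x + int L)}"
      by (auto simp: less_Suc_eq)
    then show ?thesis using assms False unfolding height_of_up_steps_def succ by auto
  qed
qed

lemma height_of_up_steps_in_Omega0:
  assumes "A \<subseteq> {..<2 * L}" "card A = L"
  shows "height_of_up_steps L A \<in> Omega0 L"
  unfolding Omega0_def
proof (intro CollectI conjI ballI allI impI)
  show "height_of_up_steps L A (- int L) = 0" unfolding height_of_up_steps_def by simp
  have "A \<inter> {..<2 * L} = A" "nat (int L + int L) = 2 * L" using assms(1) by auto
  moreover have "height_of_up_steps L A (int L) =
      2 * int (card (A \<inter> {..<nat (int L + int L)})) - (int L + int L)"
    unfolding height_of_up_steps_def by simp
  ultimately show "height_of_up_steps L A (int L) = 0" using assms(2) by simp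
  show "\<bar>height_of_up_steps L A (x + 1) - height_of_up_steps L A x\<bar> = 1" if "x \<in> {- int L..<int L}" for x
    using height_of_up_steps_step[OF that] by simp
  show "height_of_up_steps L A x = 0" if "x \<notin> {- int L..int L}" for x
    unfolding height_of_up_steps_def using that by (simp only: if_False)
qed

lemma up_steps_height_of_up_steps:
  assumes "A \<subseteq> {..<2 * L}"
  shows "up_steps L (height_of_up_steps L A) = A"
proof -
  have "i \<in> up_steps L (height_of_up_steps L A) \<longleftrightarrow> i \<in> A" if "i < 2 * L" for i
    using height_of_up_steps_step[of "- int L + int i" L A] that unfolding up_steps_def
    by (auto split: if_splits)
  then show ?thesis using assms up_steps_subset by blast
qed

lemma binomial_le_card_Omega0: "(2 * L) choose L \<le> card (Omega0 L)"
proof -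
  let ?S = "{A. A \<subseteq> {..<2 * L} \<and> card A = L}"
  have "inj_on (height_of_up_steps L) ?S"
    by (rule inj_on_inverseI[where g = "up_steps L"]) (auto simp: up_steps_height_of_up_steps)
  moreover have "height_of_up_steps L ` ?S \<subseteq> Omega0 L"
    using height_of_up_steps_in_Omega0 by auto
  ultimately have "card ?S \<le> card (Omega0 L)"
    by (metis card_image card_mono finite_Omega0)
  then show ?thesis using n_subsets[of "{..<2 * L}" L] by simp
qed

section \<open>The heat-bath representation\<close>

text \<open>Ringing both clocks of a site has, summed, the same effect as one
  flip plus one idle ring (\<open>heat_bath_pair\<close>), which is how the corner flip chain becomes an
  attractive one.\<close>

definition heat_bath :: "(int \<Rightarrow> int) \<Rightarrow> int \<Rightarrow> bool \<Rightarrow> (int \<Rightarrow> int)" where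
  "heat_bath \<zeta> x up =
     (if up then (if flip \<zeta> x x > \<zeta> x then flip \<zeta> x else \<zeta>)
      else (if flip \<zeta> x x < \<zeta> x then flip \<zeta> x else \<zeta>))"

lemma heat_bath_pair:
  "F (heat_bath \<zeta> x True) + F (heat_bath \<zeta> x False) = F (flip \<zeta> x) + (F \<zeta> :: real)"
proof -
  have "flip \<zeta> x = \<zeta>" if "flip \<zeta> x x = \<zeta> x"
    using that unfolding flip_def by (auto split: if_splits)
  then show ?thesis
    unfolding heat_bath_def by (cases "flip \<zeta> x x" "\<zeta> x" rule: linorder_cases) auto
qed

lemma heat_bath_in_Omega0: "\<zeta> \<in> Omega0 L \<Longrightarrow> x \<in> sites L \<Longrightarrow> heat_bath \<zeta> x up \<in> Omega0 L"
  unfolding heat_bath_def using flip_in_Omega0 by auto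

lemma heat_bath_eq:
  assumes "\<zeta> \<in> Omega0 L" "x \<in> sites L"
  shows "heat_bath \<zeta> x True = \<zeta>(x := min (\<zeta> (x - 1)) (\<zeta> (x + 1)) + 1)"
    and "heat_bath \<zeta> x False = \<zeta>(x := max (\<zeta> (x - 1)) (\<zeta> (x + 1)) - 1)"
  using Omega0_neighbour_steps[OF assms] unfolding heat_bath_def flip_def
  by (auto simp: fun_eq_iff abs_if split: if_splits)

lemma heat_bath_mono:
  assumes "\<eta> \<in> Omega0 L" "\<xi> \<in> Omega0 L" "x \<in> sites L" "\<And>y. \<eta> y \<le> \<xi> y"
  shows "heat_bath \<eta> x up y \<le> heat_bath \<xi> x up y"
  using assms(4)[of "x - 1"] assms(4)[of "x + 1"] assms(4)[of y]
  by (cases up) (auto simp: heat_bath_eq[OF assms(1,3)] heat_bath_eq[OF assms(2,3)])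

definition above_level :: "nat \<Rightarrow> real \<Rightarrow> (int \<Rightarrow> int) \<Rightarrow> bool" where
  "above_level L h \<zeta> \<longleftrightarrow> (\<forall>x\<in>{- int L..int L}. real_of_int (\<zeta> x) \<ge> - h)"

lemma above_level_mono: "above_level L h \<eta> \<Longrightarrow> (\<And>y. \<eta> y \<le> \<xi> y) \<Longrightarrow> above_level L h \<xi>"
  unfolding above_level_def by (meson of_int_le_iff order_trans)

lemma good_seq_Nil: "good_seq L h \<zeta> [] \<longleftrightarrow> above_level L h \<zeta>"
  unfolding good_seq_def above_level_def by simp

lemma good_seq_Cons: "good_seq L h \<zeta> (x # xs) \<longleftrightarrow> above_level L h \<zeta> \<and> good_seq L h (flip \<zeta> x) xs"
proof -
  have "(\<forall>k\<le>Suc (length xs). P (take k (x # xs))) \<longleftrightarrow> P [] \<and> (\<forall>k\<le>length xs. P (x # take k xs))"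
    for P :: "int list \<Rightarrow> bool"
    by (metis Suc_le_mono le0 not0_implies_Suc take_0 take_Suc_Cons)
  from this[of "\<lambda>ys. \<forall>y\<in>{- int L..int L}. - h \<le> real_of_int (run \<zeta> ys y)"]
  show ?thesis unfolding good_seq_def above_level_def by simp
qed

fun good_paths :: "nat \<Rightarrow> real \<Rightarrow> nat \<Rightarrow> (int \<Rightarrow> int) \<Rightarrow> real" where
  "good_paths L h 0 \<zeta> = (if above_level L h \<zeta> then 1 else 0)"
| "good_paths L h (Suc k) \<zeta> = (if above_level L h \<zeta> then
     (\<Sum>x\<in>sites L. good_paths L h k (flip \<zeta> x)) else 0)"

fun heat_bath_good_paths :: "nat \<Rightarrow> real \<Rightarrow> nat \<Rightarrow> (int \<Rightarrow> int) \<Rightarrow> real" where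
  "heat_bath_good_paths L h 0 \<zeta> = (if above_level L h \<zeta> then 1 else 0)"
| "heat_bath_good_paths L h (Suc k) \<zeta> = (if above_level L h \<zeta> then
     (\<Sum>x\<in>sites L. heat_bath_good_paths L h k (heat_bath \<zeta> x True)
                  + heat_bath_good_paths L h k (heat_bath \<zeta> x False)) else 0)"

lemma good_paths_not_above: "\<not> above_level L h \<zeta> \<Longrightarrow> good_paths L h k \<zeta> = 0"
  by (cases k) auto

lemma good_paths_bounds: "0 \<le> good_paths L h k \<zeta>" "good_paths L h k \<zeta> \<le> real (card (sites L)) ^ k"
proof -
  have "0 \<le> good_paths L h k \<zeta> \<and> good_paths L h k \<zeta> \<le> real (card (sites L)) ^ k"
  proof (induction k arbitrary: \<zeta>)
    case (Suc k)
    have "(\<Sum>x\<in>sites L. good_paths L h k (flip \<zeta> x)) \<le> (\<Sum>x\<in>sites L. real (card (sites L)) ^ k)"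
      using Suc by (intro sum_mono) auto
    moreover have "0 \<le> (\<Sum>x\<in>sites L. good_paths L h k (flip \<zeta> x))"
      using Suc by (intro sum_nonneg) auto
    ultimately show ?case by auto
  qed simp
  then show "0 \<le> good_paths L h k \<zeta>" "good_paths L h k \<zeta> \<le> real (card (sites L)) ^ k"
    by auto
qed

lemma heat_bath_good_paths_nonneg: "0 \<le> heat_bath_good_paths L h k \<zeta>"
  by (induction k arbitrary: \<zeta>) (auto intro!: sum_nonneg add_nonneg_nonneg)

lemma card_good_seqs:
  "real (card {xs. set xs \<subseteq> sites L \<and> length xs = k \<and> good_seq L h \<zeta> xs}) = good_paths L h k \<zeta>"
proof (induction k arbitrary: \<zeta>)
  case 0
  have "{xs. set xs \<subseteq> sites L \<and> length xs = 0 \<and> good_seq L h \<zeta> xs} =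
      (if above_level L h \<zeta> then {[]} else {})"
    by (auto simp: good_seq_Nil)
  then show ?case by simp
next
  case (Suc k)
  let ?M = "\<lambda>\<zeta> k. {xs. set xs \<subseteq> sites L \<and> length xs = k \<and> good_seq L h \<zeta> xs}"
  show ?case
  proof (cases "above_level L h \<zeta>")
    case False
    then have "?M \<zeta> (Suc k) = {}" by (auto simp: length_Suc_conv good_seq_Cons)
    then show ?thesis using good_paths_not_above[OF False] by (metis card.empty of_nat_0)
  next
    case True
    have eq: "?M \<zeta> (Suc k) = (\<Union>x\<in>sites L. (#) x ` ?M (flip \<zeta> x) k)"
      using True by (auto simp: length_Suc_conv good_seq_Cons)
    have fin: "finite (?M \<xi> j)" for \<xi> j
      by (rule finite_subset[OF _ finite_lists_length_eq[OF finite_sites[of L], of j]]) auto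
    have "card (?M \<zeta> (Suc k)) = (\<Sum>x\<in>sites L. card ((#) x ` ?M (flip \<zeta> x) k))"
      unfolding eq by (rule card_UN_disjoint) (use fin finite_sites in auto)
    also have "\<dots> = (\<Sum>x\<in>sites L. card (?M (flip \<zeta> x) k))"
      by (intro sum.cong refl card_image) auto
    finally show ?thesis using True Suc by simp
  qed
qed

text \<open>Of the \<open>m\<close> rings of the heat-bath chain, \<open>k\<close> act as flips and the others as idle rings.\<close>

lemma heat_bath_good_paths_eq:
  "heat_bath_good_paths L h m \<zeta> =
     (\<Sum>k\<le>m. real (m choose k) * real (card (sites L)) ^ (m - k) * good_paths L h k \<zeta>)"
proof (induction m arbitrary: \<zeta>)
  case 0
  then show ?case by simp
next
  case (Suc m)
  define N where "N = real (card (sites L))"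
  show ?case
  proof (cases "above_level L h \<zeta>")
    case False
    then show ?thesis by (simp add: good_paths_not_above)
  next
    case True
    define f where "f k = N ^ (Suc m - k) * good_paths L h k \<zeta>" for k
    have "heat_bath_good_paths L h (Suc m) \<zeta>
        = (\<Sum>x\<in>sites L. heat_bath_good_paths L h m (flip \<zeta> x) + heat_bath_good_paths L h m \<zeta>)"
      using True by (simp add: heat_bath_pair)
    also have "\<dots> = (\<Sum>k\<le>m. real (m choose k) * N ^ (m - k) * good_paths L h (Suc k) \<zeta>)
                   + N * (\<Sum>k\<le>m. real (m choose k) * N ^ (m - k) * good_paths L h k \<zeta>)"
      using True unfolding Suc N_def
      by (simp add: sum.distrib sum_distrib_left sum_distrib_right mult_ac sum.swap[of _ "sites L"])
    also have "\<dots> = (\<Sum>k\<le>m. real (m choose k) * f (Suc k)) + (\<Sum>k\<le>m. real (m choose k) * f k)"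
      unfolding f_def by (auto simp: sum_distrib_left mult_ac Suc_diff_le intro!: sum.cong)
    also have "\<dots> = (\<Sum>k\<le>Suc m. real (Suc m choose k) * f k)"
    proof -
      have shift: "(\<Sum>k\<le>Suc m. real (c k) * f k) = real (c 0) * f 0 + (\<Sum>k\<le>m. real (c (Suc k)) * f (Suc k))"
        for c :: "nat \<Rightarrow> nat"
        by (rule sum.atMost_Suc_shift)
      have "(\<Sum>k\<le>Suc m. real (Suc m choose k) * f k)
          = f 0 + (\<Sum>k\<le>m. real (m choose k) * f (Suc k)) + (\<Sum>k\<le>m. real (m choose Suc k) * f (Suc k))"
        using shift[of "\<lambda>k. Suc m choose k"] by (simp add: sum.distrib algebra_simps)
      moreover have "f 0 + (\<Sum>k\<le>m. real (m choose Suc k) * f (Suc k)) = (\<Sum>k\<le>m. real (m choose k) * f k)"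
        using shift[of "\<lambda>k. m choose k"] by (simp add: binomial_eq_0)
      ultimately show ?thesis by simp
    qed
    finally show ?thesis unfolding f_def N_def by (simp add: mult.assoc)
  qed
qed

lemma heat_bath_good_paths_mono:
  assumes "\<eta> \<in> Omega0 L" "\<xi> \<in> Omega0 L" "\<And>y. \<eta> y \<le> \<xi> y"
  shows "heat_bath_good_paths L h m \<eta> \<le> heat_bath_good_paths L h m \<xi>"
  using assms
proof (induction m arbitrary: \<eta> \<xi>)
  case 0
  then show ?case using above_level_mono[of L h \<eta> \<xi>] by auto
next
  case (Suc m)
  show ?case
  proof (cases "above_level L h \<eta>")
    case False
    then show ?thesis using heat_bath_good_paths_nonneg[of L h "Suc m" \<xi>] by simp
  next
    case True
    moreover have "above_level L h \<xi>" using True above_level_mono Suc.prems(3) by blast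
    moreover have "heat_bath_good_paths L h m (heat_bath \<eta> x up) \<le>
      heat_bath_good_paths L h m (heat_bath \<xi> x up)"
      if "x \<in> sites L" for x up
      using that by (intro Suc.IH heat_bath_in_Omega0 Suc.prems heat_bath_mono[OF Suc.prems(1,2)])
    ultimately show ?thesis by (simp add: sum_mono add_mono)
  qed
qed

section \<open>The staying probability as a Poisson mixture\<close>

lemma poisson_sums: "(\<lambda>k. exp (- x) * x ^ k / fact k) sums (1 :: real)"
proof -
  have "(\<lambda>k. exp (- x) * (x ^ k / fact k)) sums (exp (- x) * exp x)"
    using exp_converges[of x] by (intro sums_mult) (simp add: divide_inverse mult.commute)
  then show ?thesis by (simp add: exp_minus field_simps)
qed

lemma poisson_mean_sums: "(\<lambda>k. real k * (exp (- x) * x ^ k / fact k)) sums (x :: real)"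
proof -
  have "(\<lambda>k. x * (exp (- x) * x ^ k / fact k)) sums (x * 1)"
    by (intro sums_mult poisson_sums)
  moreover have "real (Suc k) * (exp (- x) * x ^ Suc k / fact (Suc k)) =
    x * (exp (- x) * x ^ k / fact k)" for k
    by (simp only: fact_Suc power_Suc) (simp add: field_simps del: of_nat_Suc)
  ultimately have "(\<lambda>k. real (Suc k) * (exp (- x) * x ^ Suc k / fact (Suc k))) sums x"
    by (simp only: mult_1_right)
  then show ?thesis by (subst (asm) sums_Suc_iff) simp
qed

lemma stay_prob_sums:
  fixes L :: nat
  assumes "T \<ge> 0"
  defines "N \<equiv> real (card (sites L))"
  shows "(\<lambda>k. exp (- N * T) * (N * T) ^ k / fact k * (good_paths L h k \<zeta> / N ^ k)) sums
    stay_prob L h T \<zeta>"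
    and "0 \<le> stay_prob L h T \<zeta>" "stay_prob L h T \<zeta> \<le> 1"
proof -
  define p where "p k = exp (- N * T) * (N * T) ^ k / fact k" for k
  have p: "p sums 1" using poisson_sums[of "N * T"] unfolding p_def by simp
  have bounded: "0 \<le> p k * (good_paths L h k \<zeta> / N ^ k) \<and> p k * (good_paths L h k \<zeta> / N ^ k) \<le> p k" for k
  proof -
    have "0 \<le> p k" unfolding p_def N_def using assms(1) by simp
    moreover have "0 \<le> good_paths L h k \<zeta> / N ^ k" "good_paths L h k \<zeta> / N ^ k \<le> 1"
      using good_paths_bounds[of L h k \<zeta>] unfolding N_def by (auto simp: divide_le_eq_1)
    ultimately show ?thesis by (meson mult_nonneg_nonneg mult_left_le)
  qed
  have "norm (p k * (good_paths L h k \<zeta> / N ^ k)) \<le> p k" for k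
    using bounded[of k] by (metis abs_of_nonneg real_norm_def)
  then have "summable (\<lambda>k. p k * (good_paths L h k \<zeta> / N ^ k))"
    by (rule summable_comparison_test'[OF sums_summable[OF p]])
  then have S: "(\<lambda>k. p k * (good_paths L h k \<zeta> / N ^ k)) sums stay_prob L h T \<zeta>"
    unfolding stay_prob_def Let_def card_good_seqs p_def N_def by (rule summable_sums)
  then show "(\<lambda>k. exp (- N * T) * (N * T) ^ k / fact k * (good_paths L h k \<zeta> / N ^ k)) sums
    stay_prob L h T \<zeta>"
    unfolding p_def .
  show "0 \<le> stay_prob L h T \<zeta>" by (rule sums_le[OF _ sums_zero S]) (use bounded in auto)
  show "stay_prob L h T \<zeta> \<le> 1" by (rule sums_le[OF _ S p]) (use bounded in auto)
qed

text \<open>The same probability, computed with the heat-bath chain whose \<open>2N\<close> clocks ring at total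
  rate \<open>2NT\<close>; the Cauchy product splits its Poisson weights into those of the flips and of the
  idle rings.\<close>

lemma stay_prob_heat_bath_sums:
  assumes "T \<ge> 0" "card (sites L) > 0"
  shows "(\<lambda>m. exp (- 2 * real (card (sites L)) * T) * (T ^ m / fact m * heat_bath_good_paths L h m \<zeta>))
           sums stay_prob L h T \<zeta>"
proof -
  define N where "N = real (card (sites L))"
  have N: "N > 0" using assms unfolding N_def by simp
  define a where "a k = T ^ k / fact k * good_paths L h k \<zeta>" for k
  define b where "b k = (N * T) ^ k / fact k" for k
  have b: "b sums exp (N * T)"
    using exp_converges[of "N * T"] unfolding b_def by (simp add: divide_inverse mult.commute)
  have "norm (a k) \<le> b k" for k
  proof -
    have "T ^ k / fact k * good_paths L h k \<zeta> \<le> T ^ k / fact k * N ^ k"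
      using good_paths_bounds[of L h k \<zeta>] assms unfolding N_def by (intro mult_left_mono) auto
    then show ?thesis using good_paths_bounds(1)[of L h k \<zeta>] assms
      unfolding a_def b_def by (simp add: power_mult_distrib abs_mult mult_ac)
  qed
  then have sa: "summable (\<lambda>k. norm (a k))"
    by (intro summable_comparison_test[OF _ sums_summable[OF b]]) auto
  have sb: "summable (\<lambda>k. norm (b k))"
    using sums_summable[OF b] assms N unfolding b_def by simp
  have conv: "(\<Sum>i\<le>m. a i * b (m - i)) = T ^ m / fact m * heat_bath_good_paths L h m \<zeta>" for m
  proof -
    have "a i * b (m - i) = T ^ m / fact m * (real (m choose i) * N ^ (m - i) * good_paths L h i \<zeta>)"
      if "i \<le> m" for i
    proof -
      have "T ^ i * T ^ (m - i) = T ^ m" using that by (simp flip: power_add)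
      then show ?thesis unfolding a_def b_def binomial_fact[OF that]
        by (simp add: power_mult_distrib field_simps)
    qed
    then show ?thesis
      unfolding heat_bath_good_paths_eq N_def by (simp add: sum_distrib_left)
  qed
  have "(\<lambda>m. exp (- 2 * N * T) * (T ^ m / fact m * heat_bath_good_paths L h m \<zeta>)) sums
      (exp (- 2 * N * T) * (suminf a * exp (N * T)))"
    using Cauchy_product_sums[OF sa sb] sums_unique[OF b] by (intro sums_mult) (simp add: conv)
  moreover have "stay_prob L h T \<zeta> = exp (- N * T) * suminf a"
  proof -
    have "stay_prob L h T \<zeta> = (\<Sum>k. exp (- N * T) * a k)"
      using sums_unique[OF stay_prob_sums(1)[OF assms(1)]] N
      unfolding a_def N_def by (simp add: power_mult_distrib field_simps)
    also have "\<dots> = exp (- N * T) * suminf a"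
      by (rule suminf_mult) (use sa summable_norm_cancel in blast)
    finally show ?thesis .
  qed
  ultimately show ?thesis unfolding N_def by (simp add: mult_ac flip: exp_add)
qed

lemma stay_prob_mono:
  assumes "T \<ge> 0" "card (sites L) > 0" "\<eta> \<in> Omega0 L" "\<xi> \<in> Omega0 L" "\<And>y. \<eta> y \<le> \<xi> y"
  shows "stay_prob L h T \<eta> \<le> stay_prob L h T \<xi>"
proof (rule sums_le[OF _ stay_prob_heat_bath_sums[OF assms(1,2)] stay_prob_heat_bath_sums[OF assms(1,2)]])
  show "exp (- 2 * real (card (sites L)) * T) * (T ^ n / fact n * heat_bath_good_paths L h n \<eta>)
    \<le> exp (- 2 * real (card (sites L)) * T) * (T ^ n / fact n * heat_bath_good_paths L h n \<xi>)" for n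
    using assms(1) heat_bath_good_paths_mono[OF assms(3-5)] by (intro mult_left_mono) auto
qed

section \<open>Stationarity of the uniform measure\<close>

definition low_configs :: "nat \<Rightarrow> real \<Rightarrow> (int \<Rightarrow> int) set" where
  "low_configs L h = {\<zeta> \<in> Omega0 L. \<not> above_level L h \<zeta>}"

lemma sum_Omega0_not_above:
  "(\<Sum>\<zeta>\<in>Omega0 L. if above_level L h \<zeta> then 0 else (c :: real)) = c * real (card (low_configs L h))"
proof -
  have "(\<Sum>\<zeta>\<in>Omega0 L. if above_level L h \<zeta> then 0 else c) = (\<Sum>\<zeta>\<in>low_configs L h. c)"
    unfolding low_configs_def by (rule sum.mono_neutral_cong_right) (auto simp: finite_Omega0)
  then show ?thesis by simp
qed

text \<open>Since every flip permutes \<open>Omega0 L\<close>, each of the \<open>k + 1\<close> states visited along a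
  uniformly chosen ring sequence from a uniform start is again uniform; the left-hand side
  counts the bad pairs of start and sequence.\<close>

lemma sum_bad_seqs_le:
  "(\<Sum>\<zeta>\<in>Omega0 L. real (card (sites L)) ^ k - good_paths L h k \<zeta>)
     \<le> real (k + 1) * real (card (sites L)) ^ k * real (card (low_configs L h))"
proof (induction k)
  case 0
  have "(\<Sum>\<zeta>\<in>Omega0 L. real (card (sites L)) ^ 0 - good_paths L h 0 \<zeta>)
      = (\<Sum>\<zeta>\<in>Omega0 L. if above_level L h \<zeta> then 0 else 1)"
    by (intro sum.cong) auto
  then show ?case using sum_Omega0_not_above[of L h 1] by simp
next
  case (Suc k)
  define N where "N = real (card (sites L))"
  define B where "B = real (card (low_configs L h))"
  have step: "N ^ Suc k - good_paths L h (Suc k) \<zeta>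
      \<le> (if above_level L h \<zeta> then 0 else N ^ Suc k) +
        (\<Sum>x\<in>sites L. N ^ k - good_paths L h k (flip \<zeta> x))" for \<zeta>
  proof -
    have "0 \<le> (\<Sum>x\<in>sites L. N ^ k - good_paths L h k (flip \<zeta> x))"
      using good_paths_bounds(2) unfolding N_def by (intro sum_nonneg) auto
    moreover have "(\<Sum>x\<in>sites L. N ^ k - good_paths L h k (flip \<zeta> x))
        = N * N ^ k - (\<Sum>x\<in>sites L. good_paths L h k (flip \<zeta> x))"
      by (simp add: sum_subtractf N_def)
    ultimately show ?thesis by simp
  qed
  have "(\<Sum>\<zeta>\<in>Omega0 L. N ^ Suc k - good_paths L h (Suc k) \<zeta>)
      \<le> (\<Sum>\<zeta>\<in>Omega0 L. (if above_level L h \<zeta> then 0 else N ^ Suc k)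
                       + (\<Sum>x\<in>sites L. N ^ k - good_paths L h k (flip \<zeta> x)))"
    by (rule sum_mono) (rule step)
  also have "\<dots> = N ^ Suc k * B + (\<Sum>x\<in>sites L. \<Sum>\<zeta>\<in>Omega0 L. N ^ k - good_paths L h k (flip \<zeta> x))"
    by (simp add: sum.distrib sum_Omega0_not_above sum.swap[of _ "sites L"] B_def)
  also have "(\<Sum>x\<in>sites L. \<Sum>\<zeta>\<in>Omega0 L. N ^ k - good_paths L h k (flip \<zeta> x))
      = (\<Sum>x\<in>sites L. \<Sum>\<zeta>\<in>Omega0 L. N ^ k - good_paths L h k \<zeta>)"
    by (intro sum.cong refl sum.reindex_bij_betw bij_betw_flip)
  also have "\<dots> \<le> (\<Sum>x\<in>sites L. real (k + 1) * N ^ k * B)"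
    by (rule sum_mono) (use Suc in \<open>simp add: N_def B_def\<close>)
  also have "N ^ Suc k * B + \<dots> = real (Suc k + 1) * N ^ Suc k * B"
    by (simp add: N_def algebra_simps)
  finally show ?case unfolding N_def B_def by simp
qed

lemma sum_escape_prob_le:
  assumes "T \<ge> 0" "card (sites L) > 0"
  shows "(\<Sum>\<zeta>\<in>Omega0 L. 1 - stay_prob L h T \<zeta>)
           \<le> (real (card (sites L)) * T + 1) * real (card (low_configs L h))"
proof -
  define N where "N = real (card (sites L))"
  define B where "B = real (card (low_configs L h))"
  have N: "N > 0" using assms unfolding N_def by simp
  define p where "p k = exp (- N * T) * (N * T) ^ k / fact k" for k
  have p: "p sums 1" "(\<lambda>k. real k * p k) sums (N * T)"
    using poisson_sums[of "N * T"] poisson_mean_sums[of "N * T"] unfolding p_def by simp_all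
  have "(\<lambda>k. p k - p k * (good_paths L h k \<zeta> / N ^ k)) sums (1 - stay_prob L h T \<zeta>)" for \<zeta>
    using sums_diff[OF p(1) stay_prob_sums(1)[OF assms(1)]] unfolding p_def N_def .
  then have S: "(\<lambda>k. \<Sum>\<zeta>\<in>Omega0 L. p k - p k * (good_paths L h k \<zeta> / N ^ k))
      sums (\<Sum>\<zeta>\<in>Omega0 L. 1 - stay_prob L h T \<zeta>)"
    by (intro sums_sum)
  have R: "(\<lambda>k. (real k * p k + p k) * B) sums ((N * T + 1) * B)"
    by (intro sums_mult2 sums_add p)
  have "(\<Sum>\<zeta>\<in>Omega0 L. p k - p k * (good_paths L h k \<zeta> / N ^ k)) \<le> (real k * p k + p k) * B" for k
  proof -
    have "0 \<le> p k" unfolding p_def using assms N by simp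
    have "(\<Sum>\<zeta>\<in>Omega0 L. p k - p k * (good_paths L h k \<zeta> / N ^ k))
        = p k / N ^ k * (\<Sum>\<zeta>\<in>Omega0 L. N ^ k - good_paths L h k \<zeta>)"
      using N by (simp add: sum_distrib_left field_simps)
    also have "\<dots> \<le> p k / N ^ k * (real (k + 1) * N ^ k * B)"
      using sum_bad_seqs_le[of L k h] \<open>0 \<le> p k\<close> N unfolding N_def B_def by (intro mult_left_mono) auto
    also have "\<dots> = (real k * p k + p k) * B" using N by (simp add: field_simps)
    finally show ?thesis .
  qed
  then show ?thesis using sums_le[OF _ S R] unfolding N_def B_def by blast
qed

section \<open>Few configurations reach below \<open>-h\<close>\<close>

lemma sum_Pow_power_card_Int:
  fixes a :: real
  assumes "finite S"
  shows "(\<Sum>A\<in>Pow S. a ^ card (A \<inter> T)) = (1 + a) ^ card (S \<inter> T) * 2 ^ card (S - T)"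
  using assms
proof (induction S rule: finite_induct)
  case empty
  then show ?case by simp
next
  case (insert x S)
  have inj: "inj_on (insert x) (Pow S)" using insert.hyps by (auto simp: inj_on_def)
  have card_insert: "card (insert x A \<inter> T) = card (A \<inter> T) + (if x \<in> T then 1 else 0)" if
    "A \<in> Pow S" for A
  proof -
    have "finite (A \<inter> T)" "x \<notin> A \<inter> T" using that insert.hyps by (auto intro: finite_subset)
    then show ?thesis by (cases "x \<in> T") (simp_all add: Int_insert_left)
  qed
  have "(\<Sum>A\<in>Pow (insert x S). a ^ card (A \<inter> T))
      = (\<Sum>A\<in>Pow S. a ^ card (A \<inter> T)) + (\<Sum>A\<in>insert x ` Pow S. a ^ card (A \<inter> T))"
    unfolding Pow_insert by (rule sum.union_disjoint) (use insert.hyps in auto)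
  also have "(\<Sum>A\<in>insert x ` Pow S. a ^ card (A \<inter> T)) = (\<Sum>A\<in>Pow S. a ^ card (insert x A \<inter> T))"
    by (rule sum.reindex[OF inj, unfolded comp_def])
  also have "\<dots> = (if x \<in> T then a else 1) * (\<Sum>A\<in>Pow S. a ^ card (A \<inter> T))"
    by (simp add: sum_distrib_left card_insert)
  finally have "(\<Sum>A\<in>Pow (insert x S). a ^ card (A \<inter> T))
      = (1 + (if x \<in> T then a else 1)) * (\<Sum>A\<in>Pow S. a ^ card (A \<inter> T))"
    by (simp add: algebra_simps)
  moreover have "insert x S \<inter> T = (if x \<in> T then insert x (S \<inter> T) else S \<inter> T)"
    "insert x S - T = (if x \<in> T then S - T else insert x (S - T))" "x \<notin> S \<inter> T" "x \<notin> S - T"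
    using insert.hyps by auto
  ultimately show ?case using insert by simp
qed

lemma exp_plus_exp_minus_le:
  fixes t :: real
  assumes "0 \<le> t" "t \<le> 1"
  shows "exp t + exp (- t) \<le> 2 * exp (t\<^sup>2)"
proof -
  have pos: "0 < 1 + t + t\<^sup>2 / 2" using assms by (simp add: add_pos_nonneg)
  have "exp (- t) = 1 / exp t" by (simp add: exp_minus field_simps)
  also have "\<dots> \<le> 1 / (1 + t + t\<^sup>2 / 2)"
    using pos exp_lower_Taylor_quadratic[OF assms(1)] by (intro divide_left_mono) auto
  also have "\<dots> \<le> 1 - t + t\<^sup>2"
  proof -
    have "(1 - t + t\<^sup>2) * (1 + t + t\<^sup>2 / 2) = 1 + (t * t) / 2 + (t * t * t) / 2 + (t * t * t * t) / 2"
      unfolding power2_eq_square by (simp add: algebra_simps divide_simps)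
    moreover have "0 \<le> (t * t) / 2 + (t * t * t) / 2 + (t * t * t * t) / 2" using assms by simp
    ultimately show ?thesis using pos by (simp add: divide_le_eq)
  qed
  finally have "exp (- t) \<le> 1 - t + t\<^sup>2" .
  moreover have "exp t \<le> 1 + t + t\<^sup>2" by (rule exp_bound[OF assms])
  moreover have "1 + t\<^sup>2 \<le> exp (t\<^sup>2)" by (rule exp_ge_add_one_self)
  ultimately show ?thesis by linarith
qed

definition deep_prefix_sets :: "nat \<Rightarrow> real \<Rightarrow> nat \<Rightarrow> nat set set" where
  "deep_prefix_sets L h n = {A \<in> Pow {..<2 * L}. 2 * real (card (A \<inter> {..<n})) - real n < - h}"

text \<open>Exponential Markov inequality: each \<open>A\<close> in the set has weight
  \<open>exp (-2t |A \<inter> {..<n}|) \<ge> exp (-t (n - h))\<close>, and the total weight factorises.\<close>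

lemma card_deep_prefix_sets_exp_le:
  assumes "t \<ge> 0" "n \<le> 2 * L"
  shows "real (card (deep_prefix_sets L h n)) \<le>
    (exp t + exp (- t)) ^ n * 2 ^ (2 * L - n) * exp (- t * h)"
proof -
  define a where "a = exp (- 2 * t)"
  define D where "D = deep_prefix_sets L h n"
  have weight: "exp (- t * (real n - h)) \<le> a ^ card (A \<inter> {..<n})" if "A \<in> D" for A
  proof -
    have "t * (2 * real (card (A \<inter> {..<n}))) \<le> t * (real n - h)"
      using that assms(1) unfolding D_def deep_prefix_sets_def by (intro mult_left_mono) auto
    then have "exp (- t * (real n - h)) \<le> exp (real (card (A \<inter> {..<n})) * (- 2 * t))"
      by (simp add: algebra_simps)
    then show ?thesis unfolding a_def by (simp only: exp_of_nat_mult)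
  qed
  have "real (card D) * exp (- t * (real n - h)) \<le> (\<Sum>A\<in>D. a ^ card (A \<inter> {..<n}))"
    using sum_mono[OF weight] by simp
  also have "\<dots> \<le> (\<Sum>A\<in>Pow {..<2 * L}. a ^ card (A \<inter> {..<n}))"
    by (rule sum_mono2) (auto simp: D_def deep_prefix_sets_def a_def)
  also have "\<dots> = (1 + a) ^ n * 2 ^ (2 * L - n)"
  proof -
    have "{..<2 * L} \<inter> {..<n} = {..<n}" "{..<2 * L} - {..<n} = {n..<2 * L}" using assms by auto
    then show ?thesis by (simp add: sum_Pow_power_card_Int)
  qed
  finally have markov: "real (card D) * exp (- t * (real n - h)) \<le> (1 + a) ^ n * 2 ^ (2 * L - n)" .
  have "real (card D) = real (card D) * exp (- t * (real n - h)) * exp (t * (real n - h))"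
    by (simp add: mult.assoc flip: exp_add)
  also have "\<dots> \<le> (1 + a) ^ n * 2 ^ (2 * L - n) * exp (t * (real n - h))"
    by (rule mult_right_mono[OF markov]) simp
  also have "exp (t * (real n - h)) = exp t ^ n * exp (- t * h)"
  proof -
    have "t * (real n - h) = real n * t + - t * h" by (simp add: algebra_simps)
    then show ?thesis by (simp only: exp_add exp_of_nat_mult)
  qed
  also have "(1 + a) ^ n * 2 ^ (2 * L - n) * (exp t ^ n * exp (- t * h))
      = ((1 + a) * exp t) ^ n * 2 ^ (2 * L - n) * exp (- t * h)"
    by (simp add: power_mult_distrib mult_ac)
  also have "(1 + a) * exp t = exp t + exp (- t)"
    unfolding a_def by (simp add: algebra_simps flip: exp_add)
  finally show ?thesis unfolding D_def .
qed

lemma card_deep_prefix_sets_le: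
  assumes "h > 0" "n \<le> 2 * L"
  shows "real (card (deep_prefix_sets L h n)) \<le> 4 ^ L * exp (- h\<^sup>2 / (8 * real L))"
proof (cases "h < real n")
  case False
  then have "deep_prefix_sets L h n = {}" unfolding deep_prefix_sets_def by auto
  then show ?thesis by simp
next
  case True
  have n: "real n > 0" "real n \<le> 2 * real L" using True assms by auto
  define t where "t = h / (2 * real n)"
  have t: "0 < t" "t \<le> 1" using assms True n unfolding t_def by (auto simp: field_simps)
  have "real (card (deep_prefix_sets L h n)) \<le>
    (exp t + exp (- t)) ^ n * 2 ^ (2 * L - n) * exp (- t * h)"
    using card_deep_prefix_sets_exp_le[of t n L h] t assms by simp
  also have "\<dots> \<le> (2 * exp (t\<^sup>2)) ^ n * 2 ^ (2 * L - n) * exp (- t * h)"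
    using exp_plus_exp_minus_le[of t] t by (intro mult_right_mono power_mono) (auto simp: add_pos_pos)
  also have "\<dots> = 2 ^ (n + (2 * L - n)) * (exp (t\<^sup>2) ^ n * exp (- t * h))"
    by (simp add: power_mult_distrib power_add mult_ac)
  also have "exp (t\<^sup>2) ^ n * exp (- t * h) = exp (real n * t\<^sup>2 - t * h)"
    by (simp add: exp_add[symmetric] exp_of_nat_mult[symmetric])
  also have "real n * t\<^sup>2 - t * h = - h\<^sup>2 / (4 * real n)"
    unfolding t_def using n by (simp add: field_simps power2_eq_square)
  also have "(2::real) ^ (n + (2 * L - n)) = 4 ^ L"
    using assms(2) by (simp add: power_mult)
  also have "h\<^sup>2 / (8 * real L) \<le> h\<^sup>2 / (4 * real n)"
    using n by (intro divide_left_mono) auto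
  then have "exp (- h\<^sup>2 / (4 * real n)) \<le> exp (- h\<^sup>2 / (8 * real L))"
    by simp
  finally show ?thesis by simp
qed

lemma card_low_configs_le:
  assumes "h > 0"
  shows "real (card (low_configs L h)) \<le> (2 * real L + 1) * 4 ^ L * exp (- h\<^sup>2 / (8 * real L))"
proof -
  have "up_steps L ` low_configs L h \<subseteq> (\<Union>n\<in>{..2 * L}. deep_prefix_sets L h n)"
  proof
    fix B assume "B \<in> up_steps L ` low_configs L h"
    then obtain \<zeta> x where \<zeta>: "\<zeta> \<in> Omega0 L" "B = up_steps L \<zeta>"
      and x: "x \<in> {- int L..int L}" "real_of_int (\<zeta> x) < - h"
      unfolding low_configs_def above_level_def by auto
    define n where "n = nat (x + int L)"
    have n: "x = - int L + int n" "n \<le> 2 * L" using x(1) unfolding n_def by auto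
    have "2 * real (card (up_steps L \<zeta> \<inter> {..<n})) - real n < - h"
      using x(2) height_eq_up_steps[OF \<zeta>(1) n(2)] unfolding n(1) by linarith
    then show "B \<in> (\<Union>n\<in>{..2 * L}. deep_prefix_sets L h n)"
      unfolding \<zeta>(2) deep_prefix_sets_def using n(2) up_steps_subset[of L \<zeta>] by auto
  qed
  moreover have "inj_on (up_steps L) (low_configs L h)"
    by (rule inj_on_subset[OF inj_on_up_steps]) (auto simp: low_configs_def)
  moreover have "finite (\<Union>n\<in>{..2 * L}. deep_prefix_sets L h n)"
    by (auto simp: deep_prefix_sets_def)
  ultimately have "card (low_configs L h) \<le> card (\<Union>n\<in>{..2 * L}. deep_prefix_sets L h n)"
    by (metis card_image card_mono)
  also have "\<dots> \<le> (\<Sum>n\<le>2 * L. card (deep_prefix_sets L h n))" by (rule card_UN_le) simp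
  finally have "real (card (low_configs L h)) \<le> (\<Sum>n\<le>2 * L. real (card (deep_prefix_sets L h n)))"
    by (metis of_nat_le_iff of_nat_sum)
  also have "\<dots> \<le> (\<Sum>n\<le>2 * L. 4 ^ L * exp (- h\<^sup>2 / (8 * real L)))"
    by (rule sum_mono) (use card_deep_prefix_sets_le assms in auto)
  finally show ?thesis by (simp add: mult_ac add_ac)
qed

section \<open>Comparison with the uniform initial condition\<close>

definition capped :: "nat \<Rightarrow> real \<Rightarrow> (int \<Rightarrow> int) set" where
  "capped L h = {\<xi> \<in> Omega0 L. \<forall>x\<in>{- int L..int L}. real_of_int (\<xi> x) \<le> h}"

lemma card_not_capped_le: "card (Omega0 L - capped L h) \<le> card (low_configs L h)"
proof (rule card_inj_on_le[where f = "\<lambda>\<xi> x. - \<xi> x"])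
  show "inj_on (\<lambda>\<xi> x. - \<xi> x) (Omega0 L - capped L h)" by (auto simp: inj_on_def fun_eq_iff)
  show "(\<lambda>\<xi> x. - \<xi> x) ` (Omega0 L - capped L h) \<subseteq> low_configs L h"
    using uminus_in_Omega0 by (fastforce simp: capped_def low_configs_def above_level_def)
  show "finite (low_configs L h)" using finite_Omega0 by (simp add: low_configs_def)
qed

lemma capped_le_initial:
  assumes \<eta>0: "\<eta>0 \<in> Omega0 L"
    and above_profile: "\<forall>x\<in>{- int L..int L}.
      real_of_int (\<eta>0 x) \<ge> min (real_of_int (x + int L)) (min (real_of_int (int L - x)) h)"
    and \<xi>: "\<xi> \<in> capped L h"
  shows "\<xi> y \<le> \<eta>0 y"
proof (cases "y \<in> {- int L..int L}")
  case True
  have "\<xi> \<in> Omega0 L" "real_of_int (\<xi> y) \<le> h" using \<xi> True unfolding capped_def by auto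
  then have "real_of_int (\<xi> y) \<le> min (real_of_int (y + int L)) (min (real_of_int (int L - y)) h)"
    using Omega0_le_distance_to_boundary[OF _ True] by (simp del: of_int_add of_int_diff)
  also have "\<dots> \<le> real_of_int (\<eta>0 y)" using above_profile True by blast
  finally show ?thesis by simp
next
  case False
  then show ?thesis using Omega0D(4)[OF \<eta>0] Omega0D(4)[of \<xi> L] \<xi> unfolding capped_def by simp
qed

lemma escape_prob_bound:
  assumes T: "T \<ge> 0" and L: "L \<ge> 1" and \<eta>0: "\<eta>0 \<in> Omega0 L"
    and above_profile: "\<forall>x\<in>{- int L..int L}.
      real_of_int (\<eta>0 x) \<ge> min (real_of_int (x + int L)) (min (real_of_int (int L - x)) h)"
    and q: "real (card (low_configs L h)) \<le> q * real (card (Omega0 L))"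
  shows "(1 - q) * (1 - stay_prob L h T \<eta>0) \<le> (real (card (sites L)) * T + 1) * q"
proof -
  define s where "s = stay_prob L h T \<eta>0"
  define \<Omega> where "\<Omega> = real (card (Omega0 L))"
  have N: "card (sites L) > 0" using L card_sites[of L] by simp
  have "0 < (2 * L) choose L" by simp
  then have \<Omega>: "\<Omega> > 0" using binomial_le_card_Omega0[of L] unfolding \<Omega>_def by linarith
  have "card (Omega0 L) = card (capped L h) + card (Omega0 L - capped L h)"
    using card_Int_Diff[OF finite_Omega0, where B = "capped L h"] by (simp add: Int_absorb1 capped_def)
  then have "(1 - q) * \<Omega> \<le> real (card (capped L h))"
    using card_not_capped_le[of L h] q unfolding \<Omega>_def by (simp add: algebra_simps)
  then have "(1 - q) * \<Omega> * (1 - s) \<le> real (card (capped L h)) * (1 - s)"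
    using stay_prob_sums(2,3)[OF T] unfolding s_def by (intro mult_right_mono) auto
  also have "\<dots> = (\<Sum>\<xi>\<in>capped L h. 1 - s)" by simp
  also have "\<dots> \<le> (\<Sum>\<xi>\<in>capped L h. 1 - stay_prob L h T \<xi>)"
  proof (rule sum_mono)
    fix \<xi> assume \<xi>: "\<xi> \<in> capped L h"
    have "stay_prob L h T \<xi> \<le> s"
      unfolding s_def using \<xi>
      by (intro stay_prob_mono[OF T N _ \<eta>0 capped_le_initial[OF \<eta>0 above_profile \<xi>]])
        (simp add: capped_def)
    then show "1 - s \<le> 1 - stay_prob L h T \<xi>" by simp
  qed
  also have "\<dots> \<le> (\<Sum>\<xi>\<in>Omega0 L. 1 - stay_prob L h T \<xi>)"
    using stay_prob_sums(3)[OF T] finite_Omega0 by (intro sum_mono2) (auto simp: capped_def)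
  also have "\<dots> \<le> (real (card (sites L)) * T + 1) * (q * \<Omega>)"
    using order_trans[OF sum_escape_prob_le[OF T N] mult_left_mono[OF q]] T unfolding \<Omega>_def by simp
  finally have "\<Omega> * ((1 - q) * (1 - s)) \<le> \<Omega> * ((real (card (sites L)) * T + 1) * q)"
    by (simp only: mult_ac)
  then show ?thesis using \<Omega> unfolding s_def by (simp only: mult_le_cancel_left_pos)
qed

lemma card_low_configs_fraction:
  assumes "L \<ge> 1"
  shows "real (card (low_configs L (real L powr (3/4))))
           \<le> (2 * real L + 1) * (2 * real L) * exp (- (real L powr (1/2)) / 8) * real (card (Omega0 L))"
proof -
  have L: "real L > 0" using assms by simp
  have "(real L powr (3/4))\<^sup>2 = real L powr (1 + 1/2)"
    by (simp add: power2_eq_square flip: powr_add)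
  also have "\<dots> = real L * real L powr (1/2)"
    using L by (simp only: powr_add) simp
  finally have "(real L powr (3/4))\<^sup>2 = real L * real L powr (1/2)" .
  then have exponent: "- (real L powr (3/4))\<^sup>2 / (8 * real L) = - (real L powr (1/2)) / 8"
    using L by simp
  have "4 ^ L / (2 * real L) \<le> real (card (Omega0 L))"
    using central_binomial_lower_bound[of L] binomial_le_card_Omega0[of L] assms by linarith
  then have "4 ^ L \<le> 2 * real L * real (card (Omega0 L))"
    using L by (simp add: divide_le_eq mult_ac)
  then have "(2 * real L + 1) * 4 ^ L * exp (- (real L powr (1/2)) / 8)
      \<le> (2 * real L + 1) * (2 * real L * real (card (Omega0 L))) * exp (- (real L powr (1/2)) / 8)"
    by (intro mult_right_mono mult_left_mono) auto
  moreover have "0 < real L powr (3/4)" using L by simp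
  ultimately have "real (card (low_configs L (real L powr (3/4))))
      \<le> (2 * real L + 1) * (2 * real L * real (card (Omega0 L))) * exp (- (real L powr (1/2)) / 8)"
    using card_low_configs_le[of "real L powr (3/4)" L] unfolding exponent by linarith
  then show ?thesis by (simp only: mult_ac)
qed

lemma escape_prob_le:
  assumes "L \<ge> 1" "T \<ge> 0" "\<eta>0 \<in> Omega0 L"
    and "\<forall>x\<in>{- int L..int L}. real_of_int (\<eta>0 x)
           \<ge> min (real_of_int (x + int L)) (min (real_of_int (int L - x)) (real L powr (3/4)))"
    and q: "q = (2 * real L + 1) * (2 * real L) * exp (- (real L powr (1/2)) / 8)" "q \<le> 1/2"
  shows "1 - stay_prob L (real L powr (3/4)) T \<eta>0 \<le> 2 * (2 * real L * T + 1) * q"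
proof -
  let ?s = "stay_prob L (real L powr (3/4)) T \<eta>0"
  have "0 \<le> q" "1 - ?s \<ge> 0" using q stay_prob_sums(3)[OF assms(2)] by auto
  have "1 * (1 - ?s) \<le> (2 * (1 - q)) * (1 - ?s)"
    using q(2) \<open>1 - ?s \<ge> 0\<close> by (intro mult_right_mono) auto
  also have "\<dots> = 2 * ((1 - q) * (1 - ?s))" by simp
  also have "\<dots> \<le> 2 * ((real (card (sites L)) * T + 1) * q)"
    using escape_prob_bound[OF assms(2,1,3,4) card_low_configs_fraction[OF assms(1), folded q(1)]] by simp
  also have "\<dots> \<le> 2 * ((2 * real L * T + 1) * q)"
    using card_sites[of L] \<open>0 \<le> q\<close> assms(2) by (intro mult_left_mono mult_right_mono add_right_mono) auto
  finally show ?thesis by (simp only: mult_1 mult.assoc)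
qed

theorem lemmaA1:
  shows "\<forall>\<epsilon>>0. \<exists>L0. \<forall>L\<ge>L0. \<forall>\<eta>0\<in>Omega0 L.
           (\<forall>x\<in>{- int L..int L}.
              real_of_int (\<eta>0 x) \<ge> min (real_of_int (x + int L))
                                          (min (real_of_int (int L - x)) (real L powr (3/4))))
           \<longrightarrow> stay_prob L (real L powr (3/4)) (exp (real L powr (1/4))) \<eta>0 \<ge> 1 - \<epsilon>"
proof (intro allI impI)
  fix \<epsilon> :: real assume "\<epsilon> > 0"
  define q where "q x = (2 * x + 1) * (2 * x) * exp (- (x powr (1/2)) / 8)" for x :: real
  have lim: "(q \<longlongrightarrow> 0) at_top" "((\<lambda>x. 2 * (2 * x * exp (x powr (1/4)) + 1) * q x) \<longlongrightarrow> 0) at_top"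
    unfolding q_def by real_asymp+
  have "eventually (\<lambda>x. 1 \<le> x \<and> q x \<le> 1/2 \<and> 2 * (2 * x * exp (x powr (1/4)) + 1) * q x \<le> \<epsilon>) at_top"
    using eventually_ge_at_top[of 1] order_tendstoD(2)[OF lim(1) half_gt_zero[OF zero_less_one]]
      order_tendstoD(2)[OF lim(2) \<open>\<epsilon> > 0\<close>]
    by eventually_elim (simp only: less_imp_le)
  then obtain L0 where L0: "\<And>L. L \<ge> L0 \<Longrightarrow> 1 \<le> real L \<and> q (real L) \<le> 1/2
      \<and> 2 * (2 * real L * exp (real L powr (1/4)) + 1) * q (real L) \<le> \<epsilon>"
    using eventually_compose_filterlim[OF _ filterlim_real_sequentially]
    unfolding eventually_sequentially by blast
  show "\<exists>L0. \<forall>L\<ge>L0. \<forall>\<eta>0\<in>Omega0 L.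
          (\<forall>x\<in>{- int L..int L}. real_of_int (\<eta>0 x)
             \<ge> min (real_of_int (x + int L)) (min (real_of_int (int L - x)) (real L powr (3/4))))
          \<longrightarrow> stay_prob L (real L powr (3/4)) (exp (real L powr (1/4))) \<eta>0 \<ge> 1 - \<epsilon>"
  proof (intro exI allI impI ballI)
    fix L \<eta>0 assume L: "L \<ge> L0" and "\<eta>0 \<in> Omega0 L"
      and profile: "\<forall>x\<in>{- int L..int L}. real_of_int (\<eta>0 x)
        \<ge> min (real_of_int (x + int L)) (min (real_of_int (int L - x)) (real L powr (3/4)))"
    have "1 - stay_prob L (real L powr (3/4)) (exp (real L powr (1/4))) \<eta>0
        \<le> 2 * (2 * real L * exp (real L powr (1/4)) + 1) * q (real L)"
      using L0[OF L] by (intro escape_prob_le[OF _ exp_ge_zero \<open>\<eta>0 \<in> Omega0 L\<close> profile q_def]) simp_all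
    then show "stay_prob L (real L powr (3/4)) (exp (real L powr (1/4))) \<eta>0 \<ge> 1 - \<epsilon>"
      using L0[OF L] by linarith
  qed
qed

end
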